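(* Let $\mathcal{H}$ and $\mathcal{H}_{\rm mem}$ be finite-dimensional Hilbert spaces and $U$ a unitary on $\mathcal{H}\otimes\mathcal{H}_{\rm mem}$ generating a memory channel of finite memory depth $\Delta_U=n$. Let $\Xi_1=R_1\otimes\cdots\otimes R_n$ and $\Xi_2=R'_1\otimes\cdots\otimes R'_n$ be product states of $n$ inputs (reset sequences), let $\omega_{12}$ be an arbitrary (possibly correlated) state of two copies of $\mathcal{H}$, and let $\xi$ be any memory state. Feed the memory channel $2n+2$ inputs: inputs $1,\dots,n$ in state $\Xi_1$, inputs $n+2,\dots,2n+1$ in state $\Xi_2$, and inputs $n+1$ and $2n+2$ jointly in state $\omega_{12}$. Then the joint output state of inputs $n+1$ and $2n+2$, $$\mathrm{tr}_{\text{all other outputs},\,\rm mem}\big[U_{2n+2}\cdots U_1(\Xi_1\otimes\omega_{12}\otimes\Xi_2\otimes\xi)U_1^\dagger\cdots U_{2n+2}^\dagger\big]$$ (with the factors placed at the appropriate input positions), equals $(\mathcal{E}_{\Xi_1}\otimes\mathcal{E}_{\Xi_2})[\omega_{12}]$, independently of $\xi$, where for a product reset sequence $\Xi$ of $n$ inputs $\mathcal{E}_\Xi[\omega]=\mathrm{tr}_{\rm res,mem}[U_{n+1}\cdots U_1(\Xi\otimes\omega\otimes\xi')U_1^\dagger\cdots U_{n+1}^\dagger]$ for any memory state $\xi'$ (this does not depend on $\xi'$).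
   Context: A memory channel generated by a fixed unitary $U$ on $\mathcal{H}\otimes\mathcal{H}_{\rm mem}$: for $m$ uses, inputs on $\mathcal{H}^{\otimes m}$ and memory initially in state $\xi$ are transformed by $U_m\cdots U_1$, where $U_j$ denotes $U$ acting on the $j$th input and the memory (identity elsewhere), and the memory is then traced out. For uncorrelated inputs $\varrho_1,\varrho_2,\dots$ and initial memory $\xi_1$, the $j$th input undergoes $\mathcal{E}_j[\varrho]=\mathrm{tr}_{\rm mem}[U(\varrho\otimes\xi_j)U^\dagger]$ with $\xi_{j+1}=\mathrm{tr}_{\rm sys}[U(\varrho_j\otimes\xi_j)U^\dagger]$. The memory depth $\Delta_U$ is the smallest integer $\Delta\ge0$ such that for every $m>\Delta$ the channel $\mathcal{E}_m$ is independent of $\xi_1$ and of $\varrho_j$ for $j<m-\Delta$ (for all choices); equivalently, for every memory state and every product sequence of $\Delta$ inputs, the channel on the next input does not depend on the memory state preceding those $\Delta$ inputs. *)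

theory Defs
  imports Complex_Main
begin

text \<open>Operators on a finite-dimensional Hilbert space with orthonormal basis indexed
  by a finite type 'i are represented by their matrices 'i \<Rightarrow> 'i \<Rightarrow> complex.
  The system space H has basis type 'a, the memory space H_mem has basis type 'b.
  Operators on m inputs plus memory are matrices indexed by pairs (xs, b) with
  xs a list of length m (the basis label of each input) and b a memory label.\<close>

type_synonym 'i op = "'i \<Rightarrow> 'i \<Rightarrow> complex"

definition is_state :: "'i::finite op \<Rightarrow> bool" where
  "is_state \<rho> \<longleftrightarrow>
     (\<forall>v::'i \<Rightarrow> complex. (\<Sum>x\<in>UNIV. \<Sum>y\<in>UNIV. cnj (v x) * \<rho> x y * v y) \<in> \<real> \<and>
                          0 \<le> Re (\<Sum>x\<in>UNIV. \<Sum>y\<in>UNIV. cnj (v x) * \<rho> x y * v y))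
   \<and> (\<Sum>x\<in>UNIV. \<rho> x x) = 1"

definition unitary_op :: "'i::finite op \<Rightarrow> bool" where
  "unitary_op U \<longleftrightarrow>
     (\<forall>x z. (\<Sum>y\<in>UNIV. U x y * cnj (U z y)) = (if x = z then 1 else 0)) \<and>
     (\<forall>x z. (\<Sum>y\<in>UNIV. cnj (U y x) * U y z) = (if x = z then 1 else 0))"

definition lists_len :: "nat \<Rightarrow> 'a list set" where
  "lists_len m = {xs. length xs = m}"

text \<open>U acting on input j (0-based) and the memory, identity elsewhere.\<close>
definition act_on :: "('a \<times> 'b) op \<Rightarrow> nat \<Rightarrow> ('a list \<times> 'b) op" where
  "act_on U j = (\<lambda>(xs, b) (ys, c).
     if length xs = length ys \<and> j < length xs \<and> (\<forall>i<length xs. i \<noteq> j \<longrightarrow> xs ! i = ys ! i)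
     then U (xs ! j, b) (ys ! j, c) else 0)"

definition conj_by :: "nat \<Rightarrow> ('a list \<times> 'b::finite) op \<Rightarrow> ('a list \<times> 'b) op \<Rightarrow> ('a list \<times> 'b) op" where
  "conj_by m V \<rho> = (\<lambda>x z. \<Sum>y\<in>lists_len m \<times> UNIV. \<Sum>w\<in>lists_len m \<times> UNIV.
       V x y * \<rho> y w * cnj (V z w))"

text \<open>U_m \<cdots> U_1 \<rho> U_1^dagger \<cdots> U_m^dagger  (U_1 applied first).\<close>
definition evolve :: "nat \<Rightarrow> ('a \<times> 'b::finite) op \<Rightarrow> ('a list \<times> 'b) op \<Rightarrow> ('a list \<times> 'b) op" where
  "evolve m U \<rho> = fold (\<lambda>j \<sigma>. conj_by m (act_on U j) \<sigma>) [0..<m] \<rho>"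

definition prod_in :: "(nat \<Rightarrow> 'a op) \<Rightarrow> nat \<Rightarrow> 'b op \<Rightarrow> ('a list \<times> 'b) op" where
  "prod_in \<rho>s m \<xi> = (\<lambda>(xs, b) (ys, c). (\<Prod>i<m. \<rho>s i (xs ! i) (ys ! i)) * \<xi> b c)"

definition ptrace1 :: "nat \<Rightarrow> nat \<Rightarrow> ('a::finite list \<times> 'b::finite) op \<Rightarrow> 'a op" where
  "ptrace1 m p \<rho> = (\<lambda>a a'. \<Sum>(xs, b)\<in>{xs\<in>lists_len m. xs ! p = a} \<times> UNIV.
       \<rho> (xs, b) (xs[p := a'], b))"

definition ptrace2 :: "nat \<Rightarrow> nat \<Rightarrow> nat \<Rightarrow> ('a::finite list \<times> 'b::finite) op \<Rightarrow> ('a \<times> 'a) op" where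
  "ptrace2 m p q \<rho> = (\<lambda>(a1, a2) (a1', a2').
     \<Sum>(xs, b)\<in>{xs\<in>lists_len m. xs ! p = a1 \<and> xs ! q = a2} \<times> UNIV.
       \<rho> (xs, b) (xs[p := a1', q := a2'], b))"

text \<open>The channel E on the input following the n inputs R 0, ..., R (n-1), with initial
  memory \<xi>: E[\<omega>] = tr_{res,mem}[U_{n+1} \<cdots> U_1 (R \<otimes> \<omega> \<otimes> \<xi>) U_1^dagger \<cdots> U_{n+1}^dagger].\<close>
definition chan :: "('a::finite \<times> 'b::finite) op \<Rightarrow> nat \<Rightarrow> (nat \<Rightarrow> 'a op) \<Rightarrow> 'b op \<Rightarrow> 'a op \<Rightarrow> 'a op" where
  "chan U n R \<xi> \<omega> =
     ptrace1 (Suc n) n (evolve (Suc n) U (prod_in (\<lambda>i. if i < n then R i else \<omega>) (Suc n) \<xi>))"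

definition depth_ok :: "('a::finite \<times> 'b::finite) op \<Rightarrow> nat \<Rightarrow> bool" where
  "depth_ok U \<Delta> \<longleftrightarrow>
     (\<forall>\<xi>1 \<xi>2 R. is_state \<xi>1 \<and> is_state \<xi>2 \<and> (\<forall>i<\<Delta>. is_state (R i)) \<longrightarrow>
        (\<forall>\<rho>. is_state \<rho> \<longrightarrow> chan U \<Delta> R \<xi>1 \<rho> = chan U \<Delta> R \<xi>2 \<rho>))"

definition memory_depth :: "('a::finite \<times> 'b::finite) op \<Rightarrow> nat" where
  "memory_depth U = (LEAST \<Delta>. depth_ok U \<Delta>)"

definition unit_op :: "'a \<Rightarrow> 'a \<Rightarrow> 'a op" where
  "unit_op a a' = (\<lambda>x y. if x = a \<and> y = a' then 1 else 0)"

text \<open>(E1 \<otimes> E2)[\<omega>12], by linear extension from matrix units.\<close>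
definition chan_tensor :: "('a::finite op \<Rightarrow> 'a op) \<Rightarrow> ('a op \<Rightarrow> 'a op) \<Rightarrow> ('a \<times> 'a) op \<Rightarrow> ('a \<times> 'a) op" where
  "chan_tensor E1 E2 \<omega> = (\<lambda>(x1, x2) (y1, y2).
     \<Sum>a\<in>UNIV. \<Sum>a'\<in>UNIV. \<Sum>c\<in>UNIV. \<Sum>c'\<in>UNIV. \<omega> (a, c) (a', c') * E1 (unit_op a a') x1 y1 * E2 (unit_op c c') x2 y2)"

text \<open>Input for 2n+2 uses: R on inputs 1..n, \<omega>12 jointly on inputs n+1 and 2n+2,
  R' on inputs n+2..2n+1, memory \<xi> (0-based positions in the lists).\<close>
definition joint_in :: "nat \<Rightarrow> (nat \<Rightarrow> 'a op) \<Rightarrow> (nat \<Rightarrow> 'a op) \<Rightarrow> ('a \<times> 'a) op \<Rightarrow> 'b op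
    \<Rightarrow> ('a list \<times> 'b) op" where
  "joint_in n R R' \<omega> \<xi> = (\<lambda>(xs, b) (ys, c).
     (\<Prod>i<n. R i (xs ! i) (ys ! i)) *
     \<omega> (xs ! n, xs ! (2 * n + 1)) (ys ! n, ys ! (2 * n + 1)) *
     (\<Prod>i<n. R' i (xs ! (n + 1 + i)) (ys ! (n + 1 + i))) *
     \<xi> b c)"

end

theory Submission
  imports Defs
begin

text \<open>Unrolling the unitaries, feeding product-form inputs sandwiches the memory state between
  products of blocks of \<open>U\<close>, the Kraus operators of the memory. So the output of the input
  that follows a reset sequence is a fixed linear function of the memory operator left behind by
  that sequence, which is itself linear in the initial memory. Finite memory depth makes this
  function constant on states; since states span all operators, it equals the trace of the
  initial memory operator times the channel. In the joint experiment the memory entering the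
  second reset sequence is an operator whose trace is the matching output entry of the first
  block; after decomposing \<open>\<omega>12\<close> into matrix units the factorisation applies twice and
  yields \<open>(E\<^sub>1 \<otimes> E\<^sub>2)[\<omega>12]\<close>.\<close>

lemma finite_lists_len [simp]: "finite (lists_len m :: 'a::finite list set)"
  using finite_lists_length_eq[of "UNIV :: 'a set" m] by (simp add: lists_len_def)

lemma sum_lists_len_append:
  fixes f :: "'a::finite list \<Rightarrow> 'c::comm_monoid_add"
  shows "(\<Sum>zs\<in>lists_len (k + l). f zs) = (\<Sum>xs\<in>lists_len k. \<Sum>ys\<in>lists_len l. f (xs @ ys))"
proof -
  have img: "lists_len (k + l) = (\<lambda>(xs, ys). xs @ ys) ` (lists_len k \<times> lists_len l :: ('a list \<times> 'a list) set)"
  proof (rule set_eqI, rule iffI)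
    fix zs :: "'a list" assume "zs \<in> lists_len (k + l)"
    then have "(take k zs, drop k zs) \<in> lists_len k \<times> lists_len l"
      by (auto simp: lists_len_def)
    then show "zs \<in> (\<lambda>(xs, ys). xs @ ys) ` (lists_len k \<times> lists_len l)"
      by (rule rev_image_eqI) simp
  qed (auto simp: lists_len_def)
  have inj: "inj_on (\<lambda>(xs, ys). xs @ ys) (lists_len k \<times> lists_len l :: ('a list \<times> 'a list) set)"
    by (auto simp: inj_on_def lists_len_def)
  show ?thesis
    by (simp add: img sum.reindex[OF inj] sum.cartesian_product prod.case_distrib)
qed

lemma sum_lists_len_Suc_0:
  fixes f :: "'a::finite list \<Rightarrow> 'c::comm_monoid_add"
  shows "(\<Sum>zs\<in>lists_len (Suc 0). f zs) = (\<Sum>x\<in>UNIV. f [x])"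
proof -
  have "lists_len (Suc 0) = (\<lambda>x. [x]) ` (UNIV :: 'a set)"
    by (auto simp: lists_len_def length_Suc_conv)
  moreover have "inj (\<lambda>x::'a. [x])" by (auto simp: inj_on_def)
  ultimately show ?thesis by (simp add: sum.reindex)
qed

lemma sum_lists_len_agree_except:
  fixes g :: "'a::finite list \<Rightarrow> 'c::comm_monoid_add"
  assumes xs: "length xs = m" and k: "k < m"
  shows "(\<Sum>zs\<in>lists_len m. if \<forall>i<m. i \<noteq> k \<longrightarrow> xs ! i = zs ! i then g zs else 0)
       = (\<Sum>z\<in>UNIV. g (xs[k := z]))"
proof -
  have set: "{zs \<in> lists_len m. \<forall>i<m. i \<noteq> k \<longrightarrow> xs ! i = zs ! i} = range (\<lambda>z. xs[k := z])"
  proof (rule set_eqI, rule iffI)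
    fix zs assume "zs \<in> {zs \<in> lists_len m. \<forall>i<m. i \<noteq> k \<longrightarrow> xs ! i = zs ! i}"
    then have zs: "length zs = m" "\<forall>i<m. i \<noteq> k \<longrightarrow> xs ! i = zs ! i" by (auto simp: lists_len_def)
    have "zs = xs[k := zs ! k]"
      by (rule nth_equalityI) (use zs xs k in \<open>auto simp: nth_list_update\<close>)
    then show "zs \<in> range (\<lambda>z. xs[k := z])" by blast
  qed (use xs in \<open>auto simp: lists_len_def nth_list_update\<close>)
  have inj: "inj (\<lambda>z. xs[k := z])"
    by (rule injI) (metis k xs nth_list_update_eq)
  show ?thesis
    by (simp add: sum.inter_filter[symmetric] set sum.reindex[OF inj])
qed

lemma sum_lists_len_Suc_last:
  fixes g :: "'a::finite list \<Rightarrow> 'c::comm_monoid_add"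
  shows "(\<Sum>xs\<in>{xs \<in> lists_len (Suc n). xs ! n = a}. g xs) = (\<Sum>xs\<in>lists_len n. g (xs @ [a]))"
proof -
  have "(\<Sum>xs\<in>{xs \<in> lists_len (Suc n). xs ! n = a}. g xs)
      = (\<Sum>xs\<in>lists_len (n + Suc 0). if xs ! n = a then g xs else 0)"
    by (simp add: sum.inter_filter)
  also have "\<dots> = (\<Sum>xs\<in>lists_len n. \<Sum>x\<in>UNIV. if x = a then g (xs @ [x]) else 0)"
    unfolding sum_lists_len_append sum_lists_len_Suc_0
    by (intro sum.cong refl) (auto simp: lists_len_def nth_append)
  finally show ?thesis by simp
qed

lemma sum_lists_len_two_marked:
  fixes g :: "'a::finite list \<Rightarrow> 'c::comm_monoid_add"
  shows "(\<Sum>xs\<in>{xs \<in> lists_len (2 * n + 2). xs ! n = a1 \<and> xs ! (2 * n + 1) = a2}. g xs)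
       = (\<Sum>xs1\<in>lists_len n. \<Sum>xs2\<in>lists_len n. g (xs1 @ a1 # xs2 @ [a2]))"
proof -
  have len: "2 * n + 2 = ((n + Suc 0) + n) + Suc 0" by simp
  have "(\<Sum>xs\<in>{xs \<in> lists_len (2 * n + 2). xs ! n = a1 \<and> xs ! (2 * n + 1) = a2}. g xs)
      = (\<Sum>xs\<in>lists_len (((n + Suc 0) + n) + Suc 0).
           if xs ! n = a1 \<and> xs ! (2 * n + 1) = a2 then g xs else 0)"
    unfolding len by (simp add: sum.inter_filter)
  also have "\<dots> = (\<Sum>xs1\<in>lists_len n. \<Sum>y\<in>UNIV. \<Sum>xs2\<in>lists_len n. \<Sum>x\<in>UNIV.
      if x = a2 then if y = a1 then g (xs1 @ y # xs2 @ [x]) else 0 else 0)"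
    unfolding sum_lists_len_append sum_lists_len_Suc_0
    by (intro sum.cong refl) (auto simp: lists_len_def nth_append)
  also have "\<dots> = (\<Sum>xs1\<in>lists_len n. \<Sum>xs2\<in>lists_len n. \<Sum>y\<in>UNIV. \<Sum>x\<in>UNIV.
      if x = a2 then if y = a1 then g (xs1 @ y # xs2 @ [x]) else 0 else 0)"
    by (rule sum.cong[OF refl], rule sum.swap)
  finally show ?thesis by simp
qed

lemma sum_rotate3:
  "(\<Sum>a\<in>A. \<Sum>b\<in>B. \<Sum>k\<in>K. f a b k) = (\<Sum>k\<in>K. \<Sum>a\<in>A. \<Sum>b\<in>B. f a b k)"
proof -
  have "(\<Sum>a\<in>A. \<Sum>b\<in>B. \<Sum>k\<in>K. f a b k) = (\<Sum>a\<in>A. \<Sum>k\<in>K. \<Sum>b\<in>B. f a b k)"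
    by (rule sum.cong[OF refl], rule sum.swap)
  also have "\<dots> = (\<Sum>k\<in>K. \<Sum>a\<in>A. \<Sum>b\<in>B. f a b k)" by (rule sum.swap)
  finally show ?thesis .
qed

lemma sum_swap_pairs:
  "(\<Sum>a\<in>A. \<Sum>b\<in>B. \<Sum>c\<in>C. \<Sum>d\<in>D. f a b c d) = (\<Sum>c\<in>C. \<Sum>d\<in>D. \<Sum>a\<in>A. \<Sum>b\<in>B. f a b c d)"
proof -
  have "(\<Sum>a\<in>A. \<Sum>b\<in>B. \<Sum>c\<in>C. \<Sum>d\<in>D. f a b c d) = (\<Sum>c\<in>C. \<Sum>a\<in>A. \<Sum>b\<in>B. \<Sum>d\<in>D. f a b c d)"
    by (rule sum_rotate3)
  also have "\<dots> = (\<Sum>c\<in>C. \<Sum>d\<in>D. \<Sum>a\<in>A. \<Sum>b\<in>B. f a b c d)"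
    by (rule sum.cong[OF refl], rule sum_rotate3)
  finally show ?thesis .
qed

text \<open>\<open>block U x y\<close> is the memory operator \<open>\<langle>x| U |y\<rangle>\<close>, taking input label
  \<open>y\<close> to output label \<open>x\<close>.\<close>

definition block :: "('a \<times> 'b) op \<Rightarrow> 'a \<Rightarrow> 'a \<Rightarrow> 'b op" where
  "block U x y = (\<lambda>b c. U (x, b) (y, c))"

definition op_mult :: "'b::finite op \<Rightarrow> 'b op \<Rightarrow> 'b op" where
  "op_mult A B = (\<lambda>c e. \<Sum>d\<in>UNIV. A c d * B d e)"

definition op_id :: "'b op" where
  "op_id = (\<lambda>c e. if c = e then 1 else 0)"

definition sandwich :: "'b::finite op \<Rightarrow> 'b op \<Rightarrow> 'b op \<Rightarrow> 'b op" where
  "sandwich A X B = (\<lambda>d d'. \<Sum>c\<in>UNIV. \<Sum>e\<in>UNIV. A d c * X c e * cnj (B d' e))"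

definition op_trace :: "'b::finite op \<Rightarrow> complex" where
  "op_trace X = (\<Sum>c\<in>UNIV. X c c)"

lemma sum_sandwich_assoc:
  fixes a c :: "'y \<Rightarrow> complex"
  shows "(\<Sum>y\<in>D. \<Sum>w\<in>D. a y * (\<Sum>y'\<in>E. \<Sum>w'\<in>E. B y y' * r y' w' * cnj (C w w')) * cnj (c w))
    = (\<Sum>y'\<in>E. \<Sum>w'\<in>E. (\<Sum>y\<in>D. a y * B y y') * r y' w' * cnj (\<Sum>w\<in>D. c w * C w w'))"
proof -
  have "(\<Sum>y\<in>D. \<Sum>w\<in>D. a y * (\<Sum>y'\<in>E. \<Sum>w'\<in>E. B y y' * r y' w' * cnj (C w w')) * cnj (c w))
     = (\<Sum>y\<in>D. \<Sum>w\<in>D. \<Sum>y'\<in>E. \<Sum>w'\<in>E. a y * B y y' * r y' w' * cnj (C w w') * cnj (c w))"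
    by (simp add: sum_distrib_left sum_distrib_right mult_ac)
  also have "\<dots> = (\<Sum>y'\<in>E. \<Sum>w'\<in>E. \<Sum>y\<in>D. \<Sum>w\<in>D. a y * B y y' * r y' w' * cnj (C w w') * cnj (c w))"
    by (rule sum_swap_pairs)
  also have "\<dots> = (\<Sum>y'\<in>E. \<Sum>w'\<in>E. (\<Sum>y\<in>D. a y * B y y') * r y' w' * cnj (\<Sum>w\<in>D. c w * C w w'))"
    by (simp add: sum_distrib_left sum_distrib_right mult_ac)
  finally show ?thesis .
qed

lemma op_mult_assoc: "op_mult (op_mult A B) C = op_mult A (op_mult B C)"
proof (intro ext)
  fix c e
  have "(\<Sum>d\<in>UNIV. (\<Sum>d'\<in>UNIV. A c d' * B d' d) * C d e) = (\<Sum>d\<in>UNIV. \<Sum>d'\<in>UNIV. A c d' * B d' d * C d e)"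
    by (simp add: sum_distrib_right)
  also have "\<dots> = (\<Sum>d'\<in>UNIV. \<Sum>d\<in>UNIV. A c d' * B d' d * C d e)" by (rule sum.swap)
  also have "\<dots> = (\<Sum>d'\<in>UNIV. A c d' * (\<Sum>d\<in>UNIV. B d' d * C d e))"
    by (simp add: sum_distrib_left mult_ac)
  finally show "op_mult (op_mult A B) C c e = op_mult A (op_mult B C) c e"
    by (simp add: op_mult_def)
qed

lemma op_mult_id_left [simp]: "op_mult op_id A = A"
proof (intro ext)
  fix c e
  have "(\<Sum>d\<in>UNIV. (if c = d then 1 else 0) * A d e) = (\<Sum>d\<in>UNIV. if d = c then A d e else 0)"
    by (rule sum.cong) auto
  then show "op_mult op_id A c e = A c e" by (simp add: op_mult_def op_id_def)
qed

lemma op_mult_id_right [simp]: "op_mult A op_id = A"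
proof (intro ext)
  fix c e
  have "(\<Sum>d\<in>UNIV. A c d * (if d = e then 1 else 0)) = (\<Sum>d\<in>UNIV. if d = e then A c d else 0)"
    by (rule sum.cong) auto
  then show "op_mult A op_id c e = A c e" by (simp add: op_mult_def op_id_def)
qed

lemma sandwich_op_mult: "sandwich (op_mult A2 A1) X (op_mult B2 B1) = sandwich A2 (sandwich A1 X B1) B2"
proof (intro ext)
  fix d d'
  show "sandwich (op_mult A2 A1) X (op_mult B2 B1) d d' = sandwich A2 (sandwich A1 X B1) B2 d d'"
    unfolding sandwich_def op_mult_def
    using sum_sandwich_assoc[where a = "A2 d" and B = A1 and r = X and C = B1 and c = "B2 d'"
        and D = UNIV and E = UNIV, symmetric]
    by simp
qed

lemma sandwich_sum: "sandwich A (\<lambda>c e. \<Sum>k\<in>K. f k c e) B = (\<lambda>d d'. \<Sum>k\<in>K. sandwich A (f k) B d d')"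
proof (intro ext)
  fix d d'
  have "sandwich A (\<lambda>c e. \<Sum>k\<in>K. f k c e) B d d'
      = (\<Sum>c\<in>UNIV. \<Sum>e\<in>UNIV. \<Sum>k\<in>K. A d c * f k c e * cnj (B d' e))"
    by (simp add: sandwich_def sum_distrib_left sum_distrib_right)
  also have "\<dots> = (\<Sum>k\<in>K. sandwich A (f k) B d d')"
    unfolding sandwich_def by (rule sum_rotate3)
  finally show "sandwich A (\<lambda>c e. \<Sum>k\<in>K. f k c e) B d d' = (\<Sum>k\<in>K. sandwich A (f k) B d d')" .
qed

lemma sandwich_scale: "sandwich A (\<lambda>c e. \<alpha> * X c e) B = (\<lambda>d d'. \<alpha> * sandwich A X B d d')"
  by (intro ext) (simp add: sandwich_def sum_distrib_left mult_ac)

text \<open>\<open>kraus U xs ys\<close> is the product \<open>block U x\<^sub>m y\<^sub>m \<cdots> block U x\<^sub>1 y\<^sub>1\<close> (the first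
  input acts first); it is only meaningful for lists of equal length.\<close>

fun kraus :: "('a \<times> 'b::finite) op \<Rightarrow> 'a list \<Rightarrow> 'a list \<Rightarrow> 'b op" where
  "kraus U [] ys = op_id"
| "kraus U (x # xs) ys = op_mult (kraus U xs (tl ys)) (block U x (hd ys))"

lemma kraus_append:
  "length xs1 = length ys1 \<Longrightarrow> kraus U (xs1 @ xs2) (ys1 @ ys2) = op_mult (kraus U xs2 ys2) (kraus U xs1 ys1)"
proof (induction xs1 arbitrary: ys1)
  case (Cons x xs1)
  then obtain y ys1' where "ys1 = y # ys1'" "length xs1 = length ys1'" by (cases ys1) auto
  with Cons.IH show ?case by (simp add: op_mult_assoc)
qed simp

lemma kraus_snoc:
  "length xs = length ys \<Longrightarrow> kraus U (xs @ [x]) (ys @ [y]) = op_mult (block U x y) (kraus U xs ys)"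
  by (simp add: kraus_append)

text \<open>The matrix of \<open>U\<^sub>k \<cdots> U\<^sub>1\<close> on \<open>m \<ge> k\<close> inputs and the memory.\<close>

definition evolution_op :: "('a \<times> 'b::finite) op \<Rightarrow> nat \<Rightarrow> ('a list \<times> 'b) op" where
  "evolution_op U k = (\<lambda>(xs, b) (ys, c).
     if drop k xs = drop k ys then kraus U (take k xs) (take k ys) b c else 0)"

lemma evolution_op_0: "evolution_op U 0 x y = (if y = x then 1 else 0)"
  by (cases x, cases y) (auto simp: evolution_op_def op_id_def)

lemma sum_act_on:
  fixes U :: "('a::finite \<times> 'b::finite) op"
  assumes xs: "length xs = m" and k: "k < m"
  shows "(\<Sum>zs\<in>lists_len m. \<Sum>d\<in>UNIV. act_on U k (xs, b) (zs, d) * F zs d)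
       = (\<Sum>z\<in>UNIV. \<Sum>d\<in>UNIV. U (xs ! k, b) (z, d) * F (xs[k := z]) d)"
proof -
  have "(\<Sum>zs\<in>lists_len m. \<Sum>d\<in>UNIV. act_on U k (xs, b) (zs, d) * F zs d)
      = (\<Sum>zs\<in>lists_len m. if \<forall>i<m. i \<noteq> k \<longrightarrow> xs ! i = zs ! i
           then \<Sum>d\<in>UNIV. U (xs ! k, b) (zs ! k, d) * F zs d else 0)"
  proof (rule sum.cong[OF refl])
    fix zs :: "'a list" assume "zs \<in> lists_len m"
    then have zs: "length zs = m" by (simp add: lists_len_def)
    show "(\<Sum>d\<in>UNIV. act_on U k (xs, b) (zs, d) * F zs d)
        = (if \<forall>i<m. i \<noteq> k \<longrightarrow> xs ! i = zs ! i then \<Sum>d\<in>UNIV. U (xs ! k, b) (zs ! k, d) * F zs d else 0)"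
    proof (cases "\<forall>i<m. i \<noteq> k \<longrightarrow> xs ! i = zs ! i")
      case False
      then have "(\<forall>i<m. i \<noteq> k \<longrightarrow> xs ! i = zs ! i) = False" by simp
      then show ?thesis by (simp only: act_on_def xs zs k if_False split) simp
    qed (simp add: act_on_def xs zs k)
  qed
  also have "\<dots> = (\<Sum>z\<in>UNIV. \<Sum>d\<in>UNIV. U (xs ! k, b) (z, d) * F (xs[k := z]) d)"
    using xs k by (simp add: sum_lists_len_agree_except)
  finally show ?thesis .
qed

lemma evolution_op_Suc:
  fixes U :: "('a::finite \<times> 'b::finite) op"
  assumes x: "x \<in> lists_len m \<times> UNIV" and y: "y \<in> lists_len m \<times> UNIV" and k: "k < m"
  shows "(\<Sum>v\<in>lists_len m \<times> UNIV. act_on U k x v * evolution_op U k v y) = evolution_op U (Suc k) x y"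
proof -
  obtain xs b ys c where xy: "x = (xs, b)" "y = (ys, c)" by (cases x, cases y)
  have xs: "length xs = m" and ys: "length ys = m" using x y by (auto simp: xy lists_len_def)
  have drop_ys: "drop k ys = ys ! k # drop (Suc k) ys" using ys k by (simp add: Cons_nth_drop_Suc)
  have drop_upd: "drop k (xs[k := z]) = z # drop (Suc k) xs" for z
    using xs k by (metis Cons_nth_drop_Suc drop_update_cancel length_list_update lessI nth_list_update_eq)
  have take_upd: "take k (xs[k := z]) = take k xs" for z by simp
  have "(\<Sum>v\<in>lists_len m \<times> UNIV. act_on U k x v * evolution_op U k v y)
      = (\<Sum>z\<in>UNIV. \<Sum>d\<in>UNIV. U (xs ! k, b) (z, d) * evolution_op U k (xs[k := z], d) (ys, c))"
    by (simp add: xy sum.cartesian_product' sum_act_on[OF xs k])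
  also have "\<dots> = (\<Sum>z\<in>UNIV. if z = ys ! k then \<Sum>d\<in>UNIV. U (xs ! k, b) (z, d) *
        (if drop (Suc k) xs = drop (Suc k) ys then kraus U (take k xs) (take k ys) d c else 0) else 0)"
    by (intro sum.cong refl) (simp only: evolution_op_def prod.case take_upd, simp add: drop_ys drop_upd)
  also have "\<dots> = (\<Sum>d\<in>UNIV. U (xs ! k, b) (ys ! k, d) *
        (if drop (Suc k) xs = drop (Suc k) ys then kraus U (take k xs) (take k ys) d c else 0))"
    by simp
  also have "\<dots> = evolution_op U (Suc k) x y"
  proof (cases "drop (Suc k) xs = drop (Suc k) ys")
    case True
    have "take (Suc k) xs = take k xs @ [xs ! k]" "take (Suc k) ys = take k ys @ [ys ! k]"
      using xs ys k by (simp_all add: take_Suc_conv_app_nth)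
    with True xs ys k show ?thesis
      by (simp add: xy evolution_op_def kraus_snoc op_mult_def block_def)
  qed (simp add: xy evolution_op_def)
  finally show ?thesis .
qed

lemma fold_conj_by_act_on:
  fixes U :: "('a::finite \<times> 'b::finite) op"
  assumes "k \<le> m" "x \<in> lists_len m \<times> UNIV" "z \<in> lists_len m \<times> UNIV"
  shows "fold (\<lambda>j \<sigma>. conj_by m (act_on U j) \<sigma>) [0..<k] \<rho> x z
    = (\<Sum>y\<in>lists_len m \<times> UNIV. \<Sum>w\<in>lists_len m \<times> UNIV.
         evolution_op U k x y * \<rho> y w * cnj (evolution_op U k z w))"
  using assms
proof (induction k arbitrary: x z)
  case 0
  have "(\<Sum>w\<in>lists_len m \<times> UNIV. evolution_op U 0 x y * \<rho> y w * cnj (evolution_op U 0 z w))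
      = (if y = x then \<Sum>w\<in>lists_len m \<times> UNIV. if w = z then \<rho> y w else 0 else 0)" for y
  proof -
    have "evolution_op U 0 x y * \<rho> y w * cnj (evolution_op U 0 z w)
        = (if y = x then if w = z then \<rho> y w else 0 else 0)" for w
      by (simp add: evolution_op_0)
    then show ?thesis by simp
  qed
  then show ?case using 0 by (simp add: sum.delta)
next
  case (Suc k)
  let ?D = "lists_len m \<times> (UNIV :: 'b set)"
  define \<sigma> where "\<sigma> = fold (\<lambda>j \<sigma>. conj_by m (act_on U j) \<sigma>) [0..<k] \<rho>"
  have IH: "\<sigma> y w = (\<Sum>y'\<in>?D. \<Sum>w'\<in>?D. evolution_op U k y y' * \<rho> y' w' * cnj (evolution_op U k w w'))"
    if "y \<in> ?D" "w \<in> ?D" for y w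
    unfolding \<sigma>_def using Suc that by simp
  have "fold (\<lambda>j \<sigma>. conj_by m (act_on U j) \<sigma>) [0..<Suc k] \<rho> x z = conj_by m (act_on U k) \<sigma> x z"
    by (simp add: \<sigma>_def)
  also have "\<dots> = (\<Sum>y\<in>?D. \<Sum>w\<in>?D. act_on U k x y *
      (\<Sum>y'\<in>?D. \<Sum>w'\<in>?D. evolution_op U k y y' * \<rho> y' w' * cnj (evolution_op U k w w')) * cnj (act_on U k z w))"
    unfolding conj_by_def using IH by (intro sum.cong refl) auto
  also have "\<dots> = (\<Sum>y'\<in>?D. \<Sum>w'\<in>?D. (\<Sum>y\<in>?D. act_on U k x y * evolution_op U k y y') * \<rho> y' w'
      * cnj (\<Sum>w\<in>?D. act_on U k z w * evolution_op U k w w'))"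
    by (rule sum_sandwich_assoc)
  also have "\<dots> = (\<Sum>y'\<in>?D. \<Sum>w'\<in>?D. evolution_op U (Suc k) x y' * \<rho> y' w' * cnj (evolution_op U (Suc k) z w'))"
    using Suc.prems by (intro sum.cong refl) (simp add: evolution_op_Suc)
  finally show ?case .
qed

text \<open>The memory operator produced from the memory state \<open>X\<close> when inputs with joint
  matrix \<open>P\<close> are fed in and the outputs are projected onto the labels \<open>xs\<close>, \<open>xs'\<close>.\<close>

definition transfer :: "('a \<times> 'b::finite) op \<Rightarrow> nat \<Rightarrow> ('a list \<Rightarrow> 'a list \<Rightarrow> complex) \<Rightarrow>
    'a list \<Rightarrow> 'a list \<Rightarrow> 'b op \<Rightarrow> 'b op" where
  "transfer U m P xs xs' X = (\<lambda>d d'. \<Sum>ys\<in>lists_len m. \<Sum>ws\<in>lists_len m.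
     P ys ws * sandwich (kraus U xs ys) X (kraus U xs' ws) d d')"

lemma evolve_eq_transfer:
  fixes U :: "('a::finite \<times> 'b::finite) op"
  assumes xs: "length xs = m" "length xs' = m"
    and \<rho>: "\<And>ys ws c e. length ys = m \<Longrightarrow> length ws = m \<Longrightarrow> \<rho> (ys, c) (ws, e) = P ys ws * \<xi> c e"
  shows "evolve m U \<rho> (xs, b) (xs', b') = transfer U m P xs xs' \<xi> b b'"
proof -
  have "evolve m U \<rho> (xs, b) (xs', b') = (\<Sum>y\<in>lists_len m \<times> UNIV. \<Sum>w\<in>lists_len m \<times> UNIV.
      evolution_op U m (xs, b) y * \<rho> y w * cnj (evolution_op U m (xs', b') w))"
    unfolding evolve_def using xs by (intro fold_conj_by_act_on) (auto simp: lists_len_def)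
  also have "\<dots> = (\<Sum>ys\<in>lists_len m. \<Sum>c\<in>UNIV. \<Sum>ws\<in>lists_len m. \<Sum>e\<in>UNIV.
      kraus U xs ys b c * (P ys ws * \<xi> c e) * cnj (kraus U xs' ws b' e))"
    using xs by (simp add: sum.cartesian_product' evolution_op_def \<rho> lists_len_def)
  also have "\<dots> = (\<Sum>ys\<in>lists_len m. \<Sum>ws\<in>lists_len m. \<Sum>c\<in>UNIV. \<Sum>e\<in>UNIV.
      kraus U xs ys b c * (P ys ws * \<xi> c e) * cnj (kraus U xs' ws b' e))"
    by (rule sum.cong[OF refl], rule sum.swap)
  also have "\<dots> = transfer U m P xs xs' \<xi> b b'"
    by (simp add: transfer_def sandwich_def sum_distrib_left mult_ac)
  finally show ?thesis .
qed

lemma transfer_sum: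
  "transfer U m P xs xs' (\<lambda>c e. \<Sum>k\<in>K. f k c e) = (\<lambda>d d'. \<Sum>k\<in>K. transfer U m P xs xs' (f k) d d')"
proof (intro ext)
  fix d d'
  have "transfer U m P xs xs' (\<lambda>c e. \<Sum>k\<in>K. f k c e) d d' = (\<Sum>ys\<in>lists_len m. \<Sum>ws\<in>lists_len m.
      \<Sum>k\<in>K. P ys ws * sandwich (kraus U xs ys) (f k) (kraus U xs' ws) d d')"
    by (simp add: transfer_def sandwich_sum sum_distrib_left)
  also have "\<dots> = (\<Sum>k\<in>K. transfer U m P xs xs' (f k) d d')"
    unfolding transfer_def by (rule sum_rotate3)
  finally show "transfer U m P xs xs' (\<lambda>c e. \<Sum>k\<in>K. f k c e) d d' = (\<Sum>k\<in>K. transfer U m P xs xs' (f k) d d')" .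
qed

lemma transfer_scale:
  "transfer U m P xs xs' (\<lambda>c e. \<alpha> * X c e) = (\<lambda>d d'. \<alpha> * transfer U m P xs xs' X d d')"
  by (intro ext) (simp add: transfer_def sandwich_scale sum_distrib_left mult_ac)

lemma transfer_weights_lincomb:
  "transfer U m (\<lambda>ys ws. \<Sum>p\<in>A. \<Sum>q\<in>B. \<alpha> p q * P p q ys ws) xs xs' X d d'
     = (\<Sum>p\<in>A. \<Sum>q\<in>B. \<alpha> p q * transfer U m (P p q) xs xs' X d d')"
proof -
  have "transfer U m (\<lambda>ys ws. \<Sum>p\<in>A. \<Sum>q\<in>B. \<alpha> p q * P p q ys ws) xs xs' X d d'
      = (\<Sum>ys\<in>lists_len m. \<Sum>ws\<in>lists_len m. \<Sum>p\<in>A. \<Sum>q\<in>B.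
           \<alpha> p q * (P p q ys ws * sandwich (kraus U xs ys) X (kraus U xs' ws) d d'))"
    by (simp add: transfer_def sum_distrib_left sum_distrib_right mult_ac)
  also have "\<dots> = (\<Sum>p\<in>A. \<Sum>q\<in>B. \<Sum>ys\<in>lists_len m. \<Sum>ws\<in>lists_len m.
           \<alpha> p q * (P p q ys ws * sandwich (kraus U xs ys) X (kraus U xs' ws) d d'))"
    by (rule sum_swap_pairs)
  also have "\<dots> = (\<Sum>p\<in>A. \<Sum>q\<in>B. \<alpha> p q * transfer U m (P p q) xs xs' X d d')"
    by (simp add: transfer_def sum_distrib_left)
  finally show ?thesis .
qed

lemma transfer_append:
  fixes U :: "('a::finite \<times> 'b::finite) op"
  assumes "length xs1 = k1" "length xs1' = k1" "length xs2 = k2" "length xs2' = k2"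
    and P: "\<And>ys1 ws1 ys2 ws2. length ys1 = k1 \<Longrightarrow> length ws1 = k1 \<Longrightarrow> length ys2 = k2 \<Longrightarrow>
      length ws2 = k2 \<Longrightarrow> P (ys1 @ ys2) (ws1 @ ws2) = Pa ys1 ws1 * Pb ys2 ws2"
  shows "transfer U (k1 + k2) P (xs1 @ xs2) (xs1' @ xs2') X
    = transfer U k2 Pb xs2 xs2' (transfer U k1 Pa xs1 xs1' X)"
proof (intro ext)
  fix d d'
  let ?L1 = "lists_len k1 :: 'a list set" and ?L2 = "lists_len k2 :: 'a list set"
  let ?S = "\<lambda>ys1 ws1 ys2 ws2. Pa ys1 ws1 * Pb ys2 ws2 *
    sandwich (kraus U xs2 ys2) (sandwich (kraus U xs1 ys1) X (kraus U xs1' ws1)) (kraus U xs2' ws2) d d'"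
  have "transfer U (k1 + k2) P (xs1 @ xs2) (xs1' @ xs2') X d d'
      = (\<Sum>ys1\<in>?L1. \<Sum>ys2\<in>?L2. \<Sum>ws1\<in>?L1. \<Sum>ws2\<in>?L2. ?S ys1 ws1 ys2 ws2)"
    unfolding transfer_def sum_lists_len_append using assms
    by (intro sum.cong refl) (simp add: lists_len_def kraus_append sandwich_op_mult)
  also have "\<dots> = (\<Sum>ys1\<in>?L1. \<Sum>ws1\<in>?L1. \<Sum>ys2\<in>?L2. \<Sum>ws2\<in>?L2. ?S ys1 ws1 ys2 ws2)"
    by (rule sum.cong[OF refl], rule sum.swap)
  also have "\<dots> = (\<Sum>ys2\<in>?L2. \<Sum>ws2\<in>?L2. \<Sum>ys1\<in>?L1. \<Sum>ws1\<in>?L1. ?S ys1 ws1 ys2 ws2)"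
    by (rule sum_swap_pairs)
  also have "\<dots> = transfer U k2 Pb xs2 xs2' (transfer U k1 Pa xs1 xs1' X) d d'"
    unfolding transfer_def[of U k2] unfolding transfer_def[of U k1] sandwich_sum sandwich_scale
    by (simp add: sum_distrib_left mult_ac)
  finally show "transfer U (k1 + k2) P (xs1 @ xs2) (xs1' @ xs2') X d d'
      = transfer U k2 Pb xs2 xs2' (transfer U k1 Pa xs1 xs1' X) d d'" .
qed

lemma transfer_single:
  fixes U :: "('a::finite \<times> 'b::finite) op"
  shows "transfer U (Suc 0) P [a] [a'] X
    = (\<lambda>d d'. \<Sum>y\<in>UNIV. \<Sum>w\<in>UNIV. P [y] [w] * sandwich (block U a y) X (block U a' w) d d')"
  unfolding transfer_def sum_lists_len_Suc_0 by simp

lemma transfer_single_unit_op: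
  fixes U :: "('a::finite \<times> 'b::finite) op"
  shows "transfer U (Suc 0) (\<lambda>ys ws. unit_op y w (ys ! 0) (ws ! 0)) [a] [a'] X
    = sandwich (block U a y) X (block U a' w)"
proof -
  have "unit_op y w y' w' * sandwich (block U a y') X (block U a' w') d d'
     = (if w' = w then if y' = y then sandwich (block U a y') X (block U a' w') d d' else 0 else 0)"
    for y' w' d d'
    by (simp add: unit_op_def)
  then show ?thesis by (simp add: transfer_single)
qed

lemma is_state_rank_one:
  fixes u :: "'i::finite \<Rightarrow> complex"
  assumes "(\<Sum>x\<in>UNIV. u x * cnj (u x)) = 1"
  shows "is_state (\<lambda>x y. u x * cnj (u y))"
  unfolding is_state_def
proof (intro conjI allI)
  fix v :: "'i \<Rightarrow> complex"
  define s where "s = (\<Sum>x\<in>UNIV. cnj (v x) * u x)"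
  have "(\<Sum>x\<in>UNIV. \<Sum>y\<in>UNIV. cnj (v x) * (u x * cnj (u y)) * v y) = s * cnj s"
    unfolding s_def by (simp add: sum_distrib_left sum_distrib_right mult_ac) (rule sum.swap)
  also have "\<dots> = of_real ((cmod s)\<^sup>2)" by (rule complex_norm_square[symmetric])
  finally have eq: "(\<Sum>x\<in>UNIV. \<Sum>y\<in>UNIV. cnj (v x) * (u x * cnj (u y)) * v y) = of_real ((cmod s)\<^sup>2)" .
  show "(\<Sum>x\<in>UNIV. \<Sum>y\<in>UNIV. cnj (v x) * (u x * cnj (u y)) * v y) \<in> \<real>" unfolding eq by simp
  show "0 \<le> Re (\<Sum>x\<in>UNIV. \<Sum>y\<in>UNIV. cnj (v x) * (u x * cnj (u y)) * v y)" unfolding eq by simp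
qed (use assms in simp)

lemma sum_two_point:
  fixes g :: "'i::finite \<Rightarrow> complex"
  assumes "c \<noteq> e"
  shows "(\<Sum>x\<in>UNIV. (if x = c then p else if x = e then q else 0) * g x) = p * g c + q * g e"
proof -
  have "(\<Sum>x\<in>UNIV. (if x = c then p else if x = e then q else 0) * g x)
      = (\<Sum>x\<in>UNIV. (if x = c then p * g x else 0) + (if x = e then q * g x else 0))"
    using assms by (intro sum.cong) auto
  then show ?thesis by (simp add: sum.distrib)
qed

lemma diag_eq_if_pairing_const_on_states:
  fixes K :: "'i::finite op"
  assumes H: "\<And>S. is_state S \<Longrightarrow> (\<Sum>c\<in>UNIV. \<Sum>e\<in>UNIV. S c e * K c e) = \<kappa>"
  shows "K x x = \<kappa>"
proof -
  let ?u = "\<lambda>y::'i. if y = x then (1::complex) else 0"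
  have "is_state (\<lambda>a b. ?u a * cnj (?u b))"
    by (rule is_state_rank_one) (simp add: if_distrib[of "\<lambda>t. t * _"] cong: if_cong)
  moreover have "(\<Sum>a\<in>UNIV. \<Sum>b\<in>UNIV. ?u a * cnj (?u b) * K a b) = K x x"
  proof -
    have "?u a * cnj (?u b) * K a b = (if b = x then if a = x then K a b else 0 else 0)" for a b
      by simp
    then show ?thesis by simp
  qed
  ultimately show ?thesis using H by simp
qed

text \<open>Off-diagonal entries are probed by the pure states \<open>(|c\<rangle> + |e\<rangle>)/\<surd>2\<close> and
  \<open>(|c\<rangle> + \<i>|e\<rangle>)/\<surd>2\<close>.\<close>

lemma offdiag_eq_0_if_pairing_const_on_states:
  fixes K :: "'i::finite op"
  assumes H: "\<And>S. is_state S \<Longrightarrow> (\<Sum>c\<in>UNIV. \<Sum>e\<in>UNIV. S c e * K c e) = \<kappa>"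
    and ne: "c \<noteq> e"
  shows "K c e = 0"
proof -
  let ?u = "\<lambda>p q x. if x = c then p else if x = e then q else 0"
  have pairing: "(\<Sum>a\<in>UNIV. \<Sum>b\<in>UNIV. ?u p q a * cnj (?u p q b) * K a b)
      = p * (cnj p * K c c + cnj q * K c e) + q * (cnj p * K e c + cnj q * K e e)" for p q
  proof -
    have "(\<Sum>a\<in>UNIV. \<Sum>b\<in>UNIV. ?u p q a * cnj (?u p q b) * K a b)
        = (\<Sum>a\<in>UNIV. ?u p q a * (\<Sum>b\<in>UNIV. ?u (cnj p) (cnj q) b * K a b))"
      by (simp add: sum_distrib_left mult_ac if_distrib[of cnj] cong: if_cong)
    then show ?thesis using ne by (simp add: sum_two_point)
  qed
  have state: "is_state (\<lambda>a b. ?u p q a * cnj (?u p q b))" if "p * cnj p + q * cnj q = 1" for p q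
  proof (rule is_state_rank_one)
    have "(\<Sum>x\<in>UNIV. ?u p q x * cnj (?u p q x)) = (\<Sum>x\<in>UNIV. ?u p q x * ?u (cnj p) (cnj q) x)"
      by (intro sum.cong) auto
    also have "\<dots> = p * cnj p + q * cnj q" using ne by (subst sum_two_point) auto
    finally show "(\<Sum>x\<in>UNIV. ?u p q x * cnj (?u p q x)) = 1" using that by simp
  qed
  define r where "r = complex_of_real (sqrt (1 / 2))"
  have rr: "r * r = 1 / 2"
    unfolding r_def by (simp flip: of_real_mult)
  have cnj_r: "cnj r = r" unfolding r_def by simp
  have r_nonzero: "r \<noteq> 0" using rr by auto
  have "r * (r * K c c + r * K c e) + r * (r * K e c + r * K e e) = \<kappa>"
    using H[OF state[of r r]] pairing[of r r] rr cnj_r by simp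
  then have "(r * r) * (K c e + K e c) = 0"
    using diag_eq_if_pairing_const_on_states[OF H, of c] diag_eq_if_pairing_const_on_states[OF H, of e] rr
    by (simp add: algebra_simps)
  then have sym: "K c e + K e c = 0" using rr by simp
  have "r * (r * K c c + cnj (\<i> * r) * K c e) + (\<i> * r) * (r * K e c + cnj (\<i> * r) * K e e) = \<kappa>"
    using H[OF state[of r "\<i> * r"]] pairing[of r "\<i> * r"] rr cnj_r by (simp add: algebra_simps)
  then have antisym: "K e c - K c e = 0"
    using diag_eq_if_pairing_const_on_states[OF H, of c] diag_eq_if_pairing_const_on_states[OF H, of e] rr cnj_r r_nonzero
    by (simp add: algebra_simps)
  from sym antisym show ?thesis by (simp add: algebra_simps)
qed

lemma op_eq_scalar_if_pairing_const_on_states: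
  fixes K :: "'i::finite op"
  assumes "\<And>S. is_state S \<Longrightarrow> (\<Sum>c\<in>UNIV. \<Sum>e\<in>UNIV. S c e * K c e) = \<kappa>"
  shows "K c e = (if c = e then \<kappa> else 0)"
  using diag_eq_if_pairing_const_on_states[OF assms] offdiag_eq_0_if_pairing_const_on_states[OF assms]
  by simp

lemma op_eq_sum_unit_op:
  fixes X :: "'i::finite op"
  shows "X c e = (\<Sum>p\<in>UNIV. \<Sum>q\<in>UNIV. X p q * unit_op p q c e)"
proof -
  have "X p q * unit_op p q c e = (if q = e then if p = c then X p q else 0 else 0)" for p q
    by (simp add: unit_op_def)
  then show ?thesis by simp
qed

definition prod_entry :: "(nat \<Rightarrow> 'a op) \<Rightarrow> nat \<Rightarrow> 'a list \<Rightarrow> 'a list \<Rightarrow> complex" where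
  "prod_entry R n ys ws = (\<Prod>i<n. R i (ys ! i) (ws ! i))"

text \<open>The memory after feeding the reset sequence \<open>R\<close> to memory \<open>X\<close>, with the
  \<open>n\<close> outputs traced out.\<close>

definition reset_map :: "('a \<times> 'b::finite) op \<Rightarrow> nat \<Rightarrow> (nat \<Rightarrow> 'a op) \<Rightarrow> 'b op \<Rightarrow> 'b op" where
  "reset_map U n R X = (\<lambda>d d'. \<Sum>xs\<in>lists_len n. transfer U n (prod_entry R n) xs xs X d d')"

text \<open>Entry \<open>(a, a')\<close> of the output of one use of the channel with input \<open>|y\<rangle>\<langle>w|\<close>
  and memory \<open>Y\<close>.\<close>

definition step_trace :: "('a \<times> 'b::finite) op \<Rightarrow> 'a \<Rightarrow> 'a \<Rightarrow> 'a \<Rightarrow> 'a \<Rightarrow> 'b op \<Rightarrow> complex" where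
  "step_trace U a a' y w Y = op_trace (sandwich (block U a y) Y (block U a' w))"

lemma reset_map_sum:
  "reset_map U n R (\<lambda>c e. \<Sum>k\<in>K. f k c e) = (\<lambda>d d'. \<Sum>k\<in>K. reset_map U n R (f k) d d')"
  by (intro ext) (simp add: reset_map_def transfer_sum sum.swap[of _ K])

lemma reset_map_scale:
  "reset_map U n R (\<lambda>c e. \<alpha> * X c e) = (\<lambda>d d'. \<alpha> * reset_map U n R X d d')"
  by (intro ext) (simp add: reset_map_def transfer_scale sum_distrib_left)

lemma step_trace_sum:
  "step_trace U a a' y w (\<lambda>c e. \<Sum>k\<in>K. f k c e) = (\<Sum>k\<in>K. step_trace U a a' y w (f k))"
  by (simp add: step_trace_def op_trace_def sandwich_sum sum.swap[of _ K])

lemma step_trace_scale: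
  "step_trace U a a' y w (\<lambda>c e. \<alpha> * X c e) = \<alpha> * step_trace U a a' y w X"
  by (simp add: step_trace_def op_trace_def sandwich_scale sum_distrib_left)

lemma step_trace_reset_map_eq_sum:
  "step_trace U a a' y w (reset_map U n R X)
     = (\<Sum>xs\<in>lists_len n. step_trace U a a' y w (transfer U n (prod_entry R n) xs xs X))"
  unfolding reset_map_def by (rule step_trace_sum)

lemma step_trace_reset_map_expand:
  "step_trace U a a' y w (reset_map U n R X)
     = (\<Sum>c\<in>UNIV. \<Sum>e\<in>UNIV. X c e * step_trace U a a' y w (reset_map U n R (unit_op c e)))"
proof -
  have X: "X = (\<lambda>c e. \<Sum>p\<in>UNIV. \<Sum>q\<in>UNIV. X p q * unit_op p q c e)"
    by (intro ext) (rule op_eq_sum_unit_op)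
  have "step_trace U a a' y w (reset_map U n R (\<lambda>c e. \<Sum>p\<in>UNIV. \<Sum>q\<in>UNIV. X p q * unit_op p q c e))
     = (\<Sum>c\<in>UNIV. \<Sum>e\<in>UNIV. X c e * step_trace U a a' y w (reset_map U n R (unit_op c e)))"
    by (simp only: reset_map_sum reset_map_scale step_trace_sum step_trace_scale)
  then show ?thesis by (simp only: X[symmetric])
qed

lemma chan_eq_sum_step_trace:
  fixes U :: "('a::finite \<times> 'b::finite) op"
  shows "chan U n R \<xi> \<omega> a a' = (\<Sum>y\<in>UNIV. \<Sum>w\<in>UNIV. \<omega> y w * step_trace U a a' y w (reset_map U n R \<xi>))"
proof -
  let ?T = "\<lambda>xs. transfer U n (prod_entry R n) xs xs \<xi>"
  have evolve_entry: "evolve (Suc n) U (prod_in (\<lambda>i. if i < n then R i else \<omega>) (Suc n) \<xi>) (xs @ [a], b) (xs @ [a'], b)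
      = (\<Sum>y\<in>UNIV. \<Sum>w\<in>UNIV. \<omega> y w * sandwich (block U a y) (?T xs) (block U a' w) b b)"
    if "length xs = n" for xs b
  proof -
    have "evolve (Suc n) U (prod_in (\<lambda>i. if i < n then R i else \<omega>) (Suc n) \<xi>) (xs @ [a], b) (xs @ [a'], b)
        = transfer U (Suc n) (\<lambda>ys ws. \<Prod>i<Suc n. (if i < n then R i else \<omega>) (ys ! i) (ws ! i))
            (xs @ [a]) (xs @ [a']) \<xi> b b"
      by (rule evolve_eq_transfer) (simp_all add: that prod_in_def)
    also have "\<dots> = transfer U (n + Suc 0) (\<lambda>ys ws. \<Prod>i<Suc n. (if i < n then R i else \<omega>) (ys ! i) (ws ! i))
            (xs @ [a]) (xs @ [a']) \<xi> b b"
      by simp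
    also have "\<dots> = transfer U (Suc 0) (\<lambda>ys ws. \<omega> (ys ! 0) (ws ! 0)) [a] [a'] (?T xs) b b"
      by (subst transfer_append) (simp_all add: that prod_entry_def nth_append)
    finally show ?thesis by (simp add: transfer_single)
  qed
  have "chan U n R \<xi> \<omega> a a' = (\<Sum>xs\<in>lists_len n. \<Sum>b\<in>UNIV.
      evolve (Suc n) U (prod_in (\<lambda>i. if i < n then R i else \<omega>) (Suc n) \<xi>) (xs @ [a], b) ((xs @ [a])[n := a'], b))"
    by (simp add: chan_def ptrace1_def sum.cartesian_product' sum_lists_len_Suc_last)
  also have "\<dots> = (\<Sum>xs\<in>lists_len n. \<Sum>b\<in>UNIV.
      \<Sum>y\<in>UNIV. \<Sum>w\<in>UNIV. \<omega> y w * sandwich (block U a y) (?T xs) (block U a' w) b b)"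
    by (intro sum.cong refl) (simp add: lists_len_def evolve_entry list_update_append)
  also have "\<dots> = (\<Sum>y\<in>UNIV. \<Sum>w\<in>UNIV. \<Sum>xs\<in>lists_len n. \<Sum>b\<in>UNIV.
      \<omega> y w * sandwich (block U a y) (?T xs) (block U a' w) b b)"
    by (rule sum_swap_pairs)
  also have "\<dots> = (\<Sum>y\<in>UNIV. \<Sum>w\<in>UNIV. \<omega> y w * step_trace U a a' y w (reset_map U n R \<xi>))"
    by (simp only: step_trace_reset_map_eq_sum) (simp add: step_trace_def op_trace_def sum_distrib_left)
  finally show ?thesis .
qed

lemma chan_unit_op:
  fixes U :: "('a::finite \<times> 'b::finite) op"
  shows "chan U n R \<xi> (unit_op y w) a a' = step_trace U a a' y w (reset_map U n R \<xi>)"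
proof -
  have "unit_op y w y' w' * step_trace U a a' y' w' (reset_map U n R \<xi>)
      = (if w' = w then if y' = y then step_trace U a a' y' w' (reset_map U n R \<xi>) else 0 else 0)" for y' w'
    by (simp add: unit_op_def)
  then show ?thesis by (simp add: chan_eq_sum_step_trace)
qed

lemma step_trace_reset_map_state_indep:
  fixes U :: "('a::finite \<times> 'b::finite) op"
  assumes depth: "depth_ok U n" and R: "\<forall>i<n. is_state (R i)"
    and \<xi>1: "is_state \<xi>1" and \<xi>2: "is_state \<xi>2"
  shows "step_trace U a a' y w (reset_map U n R \<xi>1) = step_trace U a a' y w (reset_map U n R \<xi>2)"
proof -
  let ?K = "\<lambda>y w. step_trace U a a' y w (reset_map U n R \<xi>1) - step_trace U a a' y w (reset_map U n R \<xi>2)"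
  have "?K y w = (if y = w then 0 else 0)"
  proof (rule op_eq_scalar_if_pairing_const_on_states[where K = ?K])
    fix S :: "'a op" assume "is_state S"
    then have "chan U n R \<xi>1 S a a' = chan U n R \<xi>2 S a a'"
      using depth R \<xi>1 \<xi>2 unfolding depth_ok_def by metis
    then have "(\<Sum>y\<in>UNIV. \<Sum>w\<in>UNIV. S y w * step_trace U a a' y w (reset_map U n R \<xi>1))
        = (\<Sum>y\<in>UNIV. \<Sum>w\<in>UNIV. S y w * step_trace U a a' y w (reset_map U n R \<xi>2))"
      by (simp only: chan_eq_sum_step_trace)
    then show "(\<Sum>y\<in>UNIV. \<Sum>w\<in>UNIV. S y w * ?K y w) = 0"
      by (simp add: right_diff_distrib sum_subtractf)
  qed
  then show ?thesis by simp
qed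

lemma step_trace_reset_map_factor:
  fixes U :: "('a::finite \<times> 'b::finite) op"
  assumes depth: "depth_ok U n" and R: "\<forall>i<n. is_state (R i)" and \<xi>0: "is_state \<xi>0"
  shows "step_trace U a a' y w (reset_map U n R X) = op_trace X * chan U n R \<xi>0 (unit_op y w) a a'"
proof -
  let ?h = "\<lambda>X. step_trace U a a' y w (reset_map U n R X)"
  have unit: "?h (unit_op c e) = (if c = e then ?h \<xi>0 else 0)" for c e
  proof (rule op_eq_scalar_if_pairing_const_on_states[where K = "\<lambda>c e. ?h (unit_op c e)"])
    fix S :: "'b op" assume S: "is_state S"
    have "(\<Sum>c\<in>UNIV. \<Sum>e\<in>UNIV. S c e * ?h (unit_op c e)) = ?h S"
      by (rule step_trace_reset_map_expand[symmetric])
    also have "\<dots> = ?h \<xi>0"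
      by (rule step_trace_reset_map_state_indep[OF depth R S \<xi>0])
    finally show "(\<Sum>c\<in>UNIV. \<Sum>e\<in>UNIV. S c e * ?h (unit_op c e)) = ?h \<xi>0" .
  qed
  have "?h X = (\<Sum>c\<in>UNIV. \<Sum>e\<in>UNIV. X c e * ?h (unit_op c e))"
    by (rule step_trace_reset_map_expand)
  also have "\<dots> = (\<Sum>c\<in>UNIV. \<Sum>e\<in>UNIV. if e = c then X c e * ?h \<xi>0 else 0)"
    by (intro sum.cong refl) (simp add: unit)
  also have "\<dots> = op_trace X * ?h \<xi>0"
    by (simp add: op_trace_def sum_distrib_right)
  finally show ?thesis by (simp add: chan_unit_op)
qed

lemma transfer_joint_unit_op:
  fixes U :: "('a::finite \<times> 'b::finite) op"
  assumes l1: "length xs1 = n" and l2: "length xs2 = n"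
  shows "transfer U (2 * n + 2) (\<lambda>ys ws. prod_entry R n ys ws *
        unit_op p q (ys ! n, ys ! (2 * n + 1)) (ws ! n, ws ! (2 * n + 1)) *
        (\<Prod>i<n. R' i (ys ! (n + 1 + i)) (ws ! (n + 1 + i))))
      (xs1 @ a1 # xs2 @ [a2]) (xs1 @ a1' # xs2 @ [a2']) X
    = sandwich (block U a2 (snd p))
        (transfer U n (prod_entry R' n) xs2 xs2
          (sandwich (block U a1 (fst p)) (transfer U n (prod_entry R n) xs1 xs1 X) (block U a1' (fst q))))
        (block U a2' (snd q))"
proof -
  let ?unit = "\<lambda>y w ys ws. unit_op y w (ys ! 0) (ws ! 0)"
  define W_first where "W_first = (\<lambda>ys ws. prod_entry R n ys ws * unit_op (fst p) (fst q) (ys ! n) (ws ! n))"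
  define W_mid where "W_mid = (\<lambda>ys ws. W_first ys ws * (\<Prod>i<n. R' i (ys ! (n + 1 + i)) (ws ! (n + 1 + i))))"
  have unit_pair: "unit_op p q (y1, y2) (w1, w2) = unit_op (fst p) (fst q) y1 w1 * unit_op (snd p) (snd q) y2 w2"
    for y1 y2 w1 w2
    by (cases p, cases q) (simp add: unit_op_def)
  have "transfer U (((n + Suc 0) + n) + Suc 0) (\<lambda>ys ws. prod_entry R n ys ws *
        unit_op p q (ys ! n, ys ! (2 * n + 1)) (ws ! n, ws ! (2 * n + 1)) *
        (\<Prod>i<n. R' i (ys ! (n + 1 + i)) (ws ! (n + 1 + i))))
      (((xs1 @ [a1]) @ xs2) @ [a2]) (((xs1 @ [a1']) @ xs2) @ [a2']) X
    = transfer U (Suc 0) (?unit (snd p) (snd q)) [a2] [a2']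
        (transfer U ((n + Suc 0) + n) W_mid ((xs1 @ [a1]) @ xs2) ((xs1 @ [a1']) @ xs2) X)"
    by (rule transfer_append)
      (use l1 l2 in \<open>simp_all add: W_mid_def W_first_def prod_entry_def unit_pair nth_append\<close>)
  also have "\<dots> = transfer U (Suc 0) (?unit (snd p) (snd q)) [a2] [a2']
        (transfer U n (prod_entry R' n) xs2 xs2 (transfer U (n + Suc 0) W_first (xs1 @ [a1]) (xs1 @ [a1']) X))"
    by (subst transfer_append[where Pa = W_first and Pb = "prod_entry R' n"])
      (use l1 l2 in \<open>simp_all add: W_mid_def W_first_def prod_entry_def nth_append\<close>)
  also have "\<dots> = transfer U (Suc 0) (?unit (snd p) (snd q)) [a2] [a2']
        (transfer U n (prod_entry R' n) xs2 xs2
          (transfer U (Suc 0) (?unit (fst p) (fst q)) [a1] [a1'] (transfer U n (prod_entry R n) xs1 xs1 X)))"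
    by (subst transfer_append[where Pa = "prod_entry R n"])
      (use l1 l2 in \<open>simp_all add: W_first_def prod_entry_def nth_append\<close>)
  finally show ?thesis
    by (simp add: transfer_single_unit_op numeral_2_eq_2)
qed

lemma evolve_joint_in_trace_memory:
  fixes U :: "('a::finite \<times> 'b::finite) op"
  assumes l1: "length xs1 = n" and l2: "length xs2 = n"
  shows "(\<Sum>b\<in>UNIV. evolve (2 * n + 2) U (joint_in n R R' \<omega> \<xi>)
            (xs1 @ a1 # xs2 @ [a2], b) (xs1 @ a1' # xs2 @ [a2'], b))
    = (\<Sum>p\<in>UNIV. \<Sum>q\<in>UNIV. \<omega> p q * step_trace U a2 a2' (snd p) (snd q)
        (transfer U n (prod_entry R' n) xs2 xs2
          (sandwich (block U a1 (fst p)) (transfer U n (prod_entry R n) xs1 xs1 \<xi>) (block U a1' (fst q)))))"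
proof -
  \<comment> \<open>Splitting \<open>\<omega>\<close> into matrix units makes the input weights factor across the two blocks.\<close>
  define W where "W = (\<lambda>p q ys ws. prod_entry R n ys ws *
    unit_op p q (ys ! n, ys ! (2 * n + 1)) (ws ! n, ws ! (2 * n + 1)) *
    (\<Prod>i<n. R' i (ys ! (n + 1 + i)) (ws ! (n + 1 + i))))"
  let ?S = "\<lambda>p q. sandwich (block U a2 (snd p))
    (transfer U n (prod_entry R' n) xs2 xs2
      (sandwich (block U a1 (fst p)) (transfer U n (prod_entry R n) xs1 xs1 \<xi>) (block U a1' (fst q))))
    (block U a2' (snd q))"
  have "evolve (2 * n + 2) U (joint_in n R R' \<omega> \<xi>) (xs1 @ a1 # xs2 @ [a2], b) (xs1 @ a1' # xs2 @ [a2'], b)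
      = transfer U (2 * n + 2) (\<lambda>ys ws. \<Sum>p\<in>UNIV. \<Sum>q\<in>UNIV. \<omega> p q * W p q ys ws)
          (xs1 @ a1 # xs2 @ [a2]) (xs1 @ a1' # xs2 @ [a2']) \<xi> b b" for b
  proof (rule evolve_eq_transfer)
    fix ys ws :: "'a list" and c e
    show "joint_in n R R' \<omega> \<xi> (ys, c) (ws, e) = (\<Sum>p\<in>UNIV. \<Sum>q\<in>UNIV. \<omega> p q * W p q ys ws) * \<xi> c e"
      using op_eq_sum_unit_op[of \<omega> "(ys ! n, ys ! (2 * n + 1))" "(ws ! n, ws ! (2 * n + 1))"]
      by (simp add: joint_in_def W_def prod_entry_def sum_distrib_left sum_distrib_right mult_ac)
  qed (use l1 l2 in simp_all)
  also have "\<dots> b = (\<Sum>p\<in>UNIV. \<Sum>q\<in>UNIV. \<omega> p q * ?S p q b b)" for b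
    by (simp only: transfer_weights_lincomb W_def transfer_joint_unit_op[OF l1 l2])
  finally have entry: "evolve (2 * n + 2) U (joint_in n R R' \<omega> \<xi>)
      (xs1 @ a1 # xs2 @ [a2], b) (xs1 @ a1' # xs2 @ [a2'], b)
    = (\<Sum>p\<in>UNIV. \<Sum>q\<in>UNIV. \<omega> p q * ?S p q b b)" for b .
  have "(\<Sum>b\<in>UNIV. \<Sum>p\<in>UNIV. \<Sum>q\<in>UNIV. \<omega> p q * ?S p q b b)
      = (\<Sum>p\<in>UNIV. \<Sum>q\<in>UNIV. \<Sum>b\<in>UNIV. \<omega> p q * ?S p q b b)"
    by (rule sum_rotate3[symmetric])
  then show ?thesis
    by (simp only: entry) (simp add: step_trace_def op_trace_def sum_distrib_left)
qed

lemma step_trace_reset_map_sandwich_reset_map: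
  "step_trace U a a' y w (reset_map U n R' (sandwich A (reset_map U n R \<xi>) B))
     = (\<Sum>xs1\<in>lists_len n. \<Sum>xs2\<in>lists_len n. step_trace U a a' y w
         (transfer U n (prod_entry R' n) xs2 xs2 (sandwich A (transfer U n (prod_entry R n) xs1 xs1 \<xi>) B)))"
  by (simp only: reset_map_def[of U n R \<xi>] sandwich_sum reset_map_sum step_trace_sum step_trace_reset_map_eq_sum)

lemma ptrace2_evolve_joint_in:
  fixes U :: "('a::finite \<times> 'b::finite) op"
  shows "ptrace2 (2 * n + 2) n (2 * n + 1) (evolve (2 * n + 2) U (joint_in n R R' \<omega> \<xi>)) (a1, a2) (a1', a2')
    = (\<Sum>p\<in>UNIV. \<Sum>q\<in>UNIV. \<omega> p q * step_trace U a2 a2' (snd p) (snd q)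
        (reset_map U n R' (sandwich (block U a1 (fst p)) (reset_map U n R \<xi>) (block U a1' (fst q)))))"
proof -
  let ?T = "\<lambda>p q xs1 xs2. step_trace U a2 a2' (snd p) (snd q) (transfer U n (prod_entry R' n) xs2 xs2
    (sandwich (block U a1 (fst p)) (transfer U n (prod_entry R n) xs1 xs1 \<xi>) (block U a1' (fst q))))"
  have "ptrace2 (2 * n + 2) n (2 * n + 1) (evolve (2 * n + 2) U (joint_in n R R' \<omega> \<xi>)) (a1, a2) (a1', a2')
      = (\<Sum>xs1\<in>lists_len n. \<Sum>xs2\<in>lists_len n. \<Sum>b\<in>UNIV. evolve (2 * n + 2) U (joint_in n R R' \<omega> \<xi>)
          (xs1 @ a1 # xs2 @ [a2], b) ((xs1 @ a1 # xs2 @ [a2])[n := a1', 2 * n + 1 := a2'], b))"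
    by (simp only: ptrace2_def prod.case sum.cartesian_product' sum_lists_len_two_marked)
  also have "\<dots> = (\<Sum>xs1\<in>lists_len n. \<Sum>xs2\<in>lists_len n. \<Sum>p\<in>UNIV. \<Sum>q\<in>UNIV. \<omega> p q * ?T p q xs1 xs2)"
  proof (intro sum.cong refl)
    fix xs1 xs2 :: "'a list" assume "xs1 \<in> lists_len n" "xs2 \<in> lists_len n"
    then have l1: "length xs1 = n" and l2: "length xs2 = n" by (auto simp: lists_len_def)
    then have "(xs1 @ a1 # xs2 @ [a2])[n := a1', 2 * n + 1 := a2'] = xs1 @ a1' # xs2 @ [a2']"
      by (simp add: list_update_append)
    then show "(\<Sum>b\<in>UNIV. evolve (2 * n + 2) U (joint_in n R R' \<omega> \<xi>)
          (xs1 @ a1 # xs2 @ [a2], b) ((xs1 @ a1 # xs2 @ [a2])[n := a1', 2 * n + 1 := a2'], b))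
        = (\<Sum>p\<in>UNIV. \<Sum>q\<in>UNIV. \<omega> p q * ?T p q xs1 xs2)"
      by (simp only: evolve_joint_in_trace_memory[OF l1 l2])
  qed
  also have "\<dots> = (\<Sum>p\<in>UNIV. \<Sum>q\<in>UNIV. \<Sum>xs1\<in>lists_len n. \<Sum>xs2\<in>lists_len n. \<omega> p q * ?T p q xs1 xs2)"
    by (rule sum_swap_pairs)
  finally show ?thesis
    by (simp add: step_trace_reset_map_sandwich_reset_map sum_distrib_left)
qed

lemma sum_UNIV_pair_pair:
  fixes f :: "'a::finite \<times> 'c::finite \<Rightarrow> 'a \<times> 'c \<Rightarrow> 'd::comm_monoid_add"
  shows "(\<Sum>p\<in>UNIV. \<Sum>q\<in>UNIV. f p q) = (\<Sum>a\<in>UNIV. \<Sum>a'\<in>UNIV. \<Sum>c\<in>UNIV. \<Sum>c'\<in>UNIV. f (a, c) (a', c'))"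
proof -
  have "(\<Sum>p\<in>UNIV. \<Sum>q\<in>UNIV. f p q) = (\<Sum>a\<in>UNIV. \<Sum>c\<in>UNIV. \<Sum>a'\<in>UNIV. \<Sum>c'\<in>UNIV. f (a, c) (a', c'))"
    by (simp flip: UNIV_Times_UNIV add: sum.cartesian_product')
  also have "\<dots> = (\<Sum>a\<in>UNIV. \<Sum>a'\<in>UNIV. \<Sum>c\<in>UNIV. \<Sum>c'\<in>UNIV. f (a, c) (a', c'))"
    by (rule sum.cong[OF refl], rule sum.swap)
  finally show ?thesis .
qed

theorem theorem1:
  fixes U :: "('a::finite \<times> 'b::finite) op"
    and n :: nat
    and R R' :: "nat \<Rightarrow> 'a op"
    and \<omega>12 :: "('a \<times> 'a) op"
    and \<xi> \<xi>1 \<xi>2 :: "'b op"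
  assumes "unitary_op U"
    and "\<exists>\<Delta>. depth_ok U \<Delta>"
    and "memory_depth U = n"
    and "\<forall>i<n. is_state (R i)"
    and "\<forall>i<n. is_state (R' i)"
    and "is_state \<omega>12"
    and "is_state \<xi>"
    and "is_state \<xi>1"
    and "is_state \<xi>2"
  shows "ptrace2 (2 * n + 2) n (2 * n + 1) (evolve (2 * n + 2) U (joint_in n R R' \<omega>12 \<xi>))
           = chan_tensor (chan U n R \<xi>1) (chan U n R' \<xi>2) \<omega>12"
proof (intro ext)
  fix x x' :: "'a \<times> 'a"
  obtain a1 a2 a1' a2' where x: "x = (a1, a2)" "x' = (a1', a2')" by fastforce
  have depth: "depth_ok U n"
    using assms(2,3) unfolding memory_depth_def by (metis LeastI_ex)
  have trace: "op_trace \<xi> = 1" using assms(7) by (simp add: is_state_def op_trace_def)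
  have first: "op_trace (sandwich (block U a1 y) (reset_map U n R \<xi>) (block U a1' w))
      = chan U n R \<xi>1 (unit_op y w) a1 a1'" for y w
    using step_trace_reset_map_factor[OF depth assms(4,8)] trace by (simp add: step_trace_def)
  have second: "step_trace U a2 a2' y w (reset_map U n R' X) = op_trace X * chan U n R' \<xi>2 (unit_op y w) a2 a2'"
    for y w X
    by (rule step_trace_reset_map_factor[OF depth assms(5,9)])
  show "ptrace2 (2 * n + 2) n (2 * n + 1) (evolve (2 * n + 2) U (joint_in n R R' \<omega>12 \<xi>)) x x'
      = chan_tensor (chan U n R \<xi>1) (chan U n R' \<xi>2) \<omega>12 x x'"
    unfolding x ptrace2_evolve_joint_in second first
    by (simp add: chan_tensor_def sum_UNIV_pair_pair mult_ac)
qed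

end
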